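(* Let $m\ge2$, $n\ge1$, let $G_m=BS(1,m)=\langle a,t\mid tat^{-1}=a^m\rangle$ and let $A_m$ be the normal subgroup of $G_m$ generated by $a$ (so $G_m=A_m\rtimes\langle t\rangle$ with $A_m\cong\mathbb Z[1/m]$). (1) If $\rho:G_m\to T_n(\mathbb Z[1/m])$ is a special representation, then $\rho^{-1}(U_n(\mathbb Z[1/m]))=A_m$. (2) If $m$ is even, then every injective homomorphism $\rho:G_m\to T_n(\mathbb Z[1/m])$ is a special representation.
   Context: $T_n(\mathbb Z[1/m])$ is the group of invertible upper triangular $n\times n$ matrices over $\mathbb Z[1/m]$ (i.e. upper triangular with diagonal entries in $(\mathbb Z[1/m])^\times$), and $U_n(\mathbb Z[1/m])$ is its subgroup of matrices with all diagonal entries $1$. A special representation of $G_m$ is an injective homomorphism $\rho:G_m\to T_n(\mathbb Z[1/m])$ with $\rho(A_m)\subseteq U_n(\mathbb Z[1/m])$. *)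

theory Defs
  imports "HOL-Algebra.Generated_Groups" "Jordan_Normal_Form.Matrix"
begin

definition Zinv :: "nat \<Rightarrow> rat set" where
  "Zinv m = {q. \<exists>z::int. \<exists>k::nat. q = of_int z / (of_nat m) ^ k}"

text \<open>Concrete model of BS(1,m) = Z[1/m] \<rtimes> Z: the pair (b,k) is the affine map
  x \<mapsto> m^k x + b; a = (1,0), t = (0,1), and t a t^-1 = a^m.\<close>
definition BS :: "nat \<Rightarrow> (rat \<times> int) monoid" where
  "BS m = \<lparr> carrier = Zinv m \<times> UNIV,
            Group.monoid.mult = (\<lambda>x y. (fst x + (of_nat m) powi (snd x) * fst y, snd x + snd y)),
            Group.monoid.one = (0, 0) \<rparr>"

definition gen_a :: "rat \<times> int" where "gen_a = (1, 0)"
definition gen_t :: "rat \<times> int" where "gen_t = (0, 1)"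

definition A_sub :: "nat \<Rightarrow> (rat \<times> int) set" where
  "A_sub m = generate (BS m) {g \<otimes>\<^bsub>BS m\<^esub> gen_a \<otimes>\<^bsub>BS m\<^esub> inv\<^bsub>BS m\<^esub> g | g. g \<in> carrier (BS m)}"

definition T_mat :: "nat \<Rightarrow> nat \<Rightarrow> rat mat set" where
  "T_mat n m = {M. M \<in> carrier_mat n n
      \<and> (\<forall>i<n. \<forall>j<n. M $$ (i,j) \<in> Zinv m)
      \<and> (\<forall>i<n. \<forall>j<n. j < i \<longrightarrow> M $$ (i,j) = 0)
      \<and> (\<forall>i<n. M $$ (i,i) \<noteq> 0 \<and> inverse (M $$ (i,i)) \<in> Zinv m)}"

definition U_mat :: "nat \<Rightarrow> nat \<Rightarrow> rat mat set" where
  "U_mat n m = {M. M \<in> T_mat n m \<and> (\<forall>i<n. M $$ (i,i) = 1)}"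

definition inj_rep :: "nat \<Rightarrow> nat \<Rightarrow> (rat \<times> int \<Rightarrow> rat mat) \<Rightarrow> bool" where
  "inj_rep m n \<rho> \<longleftrightarrow>
     (\<forall>g \<in> carrier (BS m). \<rho> g \<in> T_mat n m)
   \<and> (\<forall>g \<in> carrier (BS m). \<forall>h \<in> carrier (BS m). \<rho> (g \<otimes>\<^bsub>BS m\<^esub> h) = \<rho> g * \<rho> h)
   \<and> inj_on \<rho> (carrier (BS m))"

definition special_rep :: "nat \<Rightarrow> nat \<Rightarrow> (rat \<times> int \<Rightarrow> rat mat) \<Rightarrow> bool" where
  "special_rep m n \<rho> \<longleftrightarrow> inj_rep m n \<rho> \<and> \<rho> ` A_sub m \<subseteq> U_mat n m"

end

theory Submission
  imports Defs
begin

text \<open>Write a = (1,0) and t = (0,1); the relation t^k a t^-k = a^(m^k) holds in every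
  representation. (1) If an element with t-exponent k \<noteq> 0 maps to a unitriangular matrix,
  so does the image V of t^k. Conjugation by V does not change a unitriangular matrix on its
  first superdiagonal that differs from the identity, while on that superdiagonal the power
  \<rho>(a)^(m^|k|) is m^|k| times \<rho>(a); so \<rho>(a) = 1, contradicting injectivity.
  (2) Each diagonal entry of \<rho> is a character into the nonzero rationals. Its value x on a
  satisfies x^(m-1) = 1 with m - 1 odd, hence x = 1, and the character is trivial on the
  normal closure A_m of a.\<close>

lemma Zinv_of_int [simp]: "of_int z \<in> Zinv m"
  unfolding Zinv_def by (rule CollectI, rule exI[of _ z], rule exI[of _ 0]) simp

lemma Zinv_zero [simp]: "0 \<in> Zinv m"
  and Zinv_one [simp]: "1 \<in> Zinv m"
  and Zinv_of_nat [simp]: "of_nat j \<in> Zinv m"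
  using Zinv_of_int[of 0 m] Zinv_of_int[of 1 m] Zinv_of_int[of "int j" m] by simp_all

lemma Zinv_add: assumes "m > 0" "a \<in> Zinv m" "b \<in> Zinv m" shows "a + b \<in> Zinv m"
proof -
  obtain z k w l where a: "a = of_int z / of_nat m ^ k" and b: "b = of_int w / of_nat m ^ l"
    using assms unfolding Zinv_def by blast
  have "a + b = of_int (z * int m ^ l + w * int m ^ k) / of_nat m ^ (k + l)"
    using assms(1) by (simp add: a b field_simps power_add)
  thus ?thesis unfolding Zinv_def by blast
qed

lemma Zinv_mult: assumes "m > 0" "a \<in> Zinv m" "b \<in> Zinv m" shows "a * b \<in> Zinv m"
proof -
  obtain z k w l where a: "a = of_int z / of_nat m ^ k" and b: "b = of_int w / of_nat m ^ l"
    using assms unfolding Zinv_def by blast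
  have "a * b = of_int (z * w) / of_nat m ^ (k + l)"
    using assms(1) by (simp add: a b field_simps power_add)
  thus ?thesis unfolding Zinv_def by blast
qed

lemma Zinv_uminus: assumes "a \<in> Zinv m" shows "- a \<in> Zinv m"
proof -
  obtain z k where "a = of_int z / of_nat m ^ k"
    using assms unfolding Zinv_def by blast
  then have "- a = of_int (- z) / of_nat m ^ k" by simp
  thus ?thesis unfolding Zinv_def by blast
qed

lemma Zinv_power_int: assumes "m > 0" shows "(of_nat m :: rat) powi k \<in> Zinv m"
proof (cases "k \<ge> 0")
  case True
  then obtain j where "k = int j" by (metis nonneg_eq_int)
  then have "(of_nat m :: rat) powi k = of_int (int m ^ j) / of_nat m ^ 0" by simp
  thus ?thesis unfolding Zinv_def by blast
next
  case False
  then obtain j where "k = - int j" by (metis le_cases neg_0_le_iff_le nonneg_eq_int minus_minus)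
  then have "(of_nat m :: rat) powi k = of_int 1 / of_nat m ^ j"
    by (simp add: power_int_minus divide_inverse)
  thus ?thesis unfolding Zinv_def by blast
qed

lemma BS_mult: "(b, k) \<otimes>\<^bsub>BS m\<^esub> (c, l) = (b + of_nat m powi k * c, k + l)"
  by (simp add: BS_def)

lemma BS_one: "\<one>\<^bsub>BS m\<^esub> = (0, 0)"
  by (simp add: BS_def)

lemma BS_carrier: "carrier (BS m) = Zinv m \<times> UNIV"
  by (simp add: BS_def)

lemma BS_group: assumes "m > 0" shows "group (BS m)"
proof (rule groupI)
  fix x y assume "x \<in> carrier (BS m)" "y \<in> carrier (BS m)"
  then show "x \<otimes>\<^bsub>BS m\<^esub> y \<in> carrier (BS m)"
    using assms by (cases x, cases y)
      (auto simp: BS_mult BS_carrier intro!: Zinv_add Zinv_mult Zinv_power_int)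
next
  fix x y z assume "x \<in> carrier (BS m)" "y \<in> carrier (BS m)" "z \<in> carrier (BS m)"
  then show "x \<otimes>\<^bsub>BS m\<^esub> y \<otimes>\<^bsub>BS m\<^esub> z = x \<otimes>\<^bsub>BS m\<^esub> (y \<otimes>\<^bsub>BS m\<^esub> z)"
    using assms by (cases x, cases y, cases z) (auto simp: BS_mult power_int_add algebra_simps)
next
  fix x assume x: "x \<in> carrier (BS m)"
  obtain b k where xe: "x = (b, k)" by (cases x)
  have "(- (of_nat m powi (-k)) * b, -k) \<in> carrier (BS m)"
    using x assms by (auto simp: xe BS_carrier intro!: Zinv_mult Zinv_power_int Zinv_uminus)
  moreover have "(- (of_nat m powi (-k)) * b, -k) \<otimes>\<^bsub>BS m\<^esub> x = \<one>\<^bsub>BS m\<^esub>"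
    using assms by (simp add: xe BS_mult BS_one)
  ultimately show "\<exists>y\<in>carrier (BS m). y \<otimes>\<^bsub>BS m\<^esub> x = \<one>\<^bsub>BS m\<^esub>" by blast
qed (auto simp: BS_one BS_carrier BS_mult)

lemma BS_inv: assumes "m > 0" "b \<in> Zinv m"
  shows "inv\<^bsub>BS m\<^esub> (b, k) = (- (of_nat m powi (-k)) * b, -k)"
proof -
  interpret group "BS m" using BS_group[OF assms(1)] .
  show ?thesis
    using assms by (intro inv_equality)
      (auto simp: BS_mult BS_one BS_carrier intro!: Zinv_mult Zinv_power_int Zinv_uminus)
qed

lemma BS_conj_gen_a: assumes "m > 0" "b \<in> Zinv m"
  shows "(b, k) \<otimes>\<^bsub>BS m\<^esub> gen_a \<otimes>\<^bsub>BS m\<^esub> inv\<^bsub>BS m\<^esub> (b, k) = (of_nat m powi k, 0)"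
  using assms by (simp add: BS_inv BS_mult gen_a_def power_int_minus field_simps)

lemma BS_nat_pow: "(q, 0) [^]\<^bsub>BS m\<^esub> (j::nat) = (of_nat j * q, 0)"
  by (induction j) (simp_all add: BS_one BS_mult algebra_simps)

lemma BS_int_pow: assumes "m > 0" "q \<in> Zinv m"
  shows "(q, 0) [^]\<^bsub>BS m\<^esub> (z::int) = (of_int z * q, 0)"
  using assms by (simp add: int_pow_def2 BS_nat_pow BS_inv Zinv_mult Zinv_uminus)

lemma A_sub_eq: assumes "m > 0" shows "A_sub m = Zinv m \<times> {0}"
proof -
  interpret group "BS m" using BS_group[OF assms] .
  let ?C = "{g \<otimes>\<^bsub>BS m\<^esub> gen_a \<otimes>\<^bsub>BS m\<^esub> inv\<^bsub>BS m\<^esub> g | g. g \<in> carrier (BS m)}"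
  have C_sub: "?C \<subseteq> Zinv m \<times> {0}"
    using assms by (auto simp: BS_carrier BS_conj_gen_a Zinv_power_int)
  have "subgroup (Zinv m \<times> {0}) (BS m)"
  proof (rule subgroupI)
    show "Zinv m \<times> {0} \<noteq> {}" using Zinv_zero by blast
  qed (use assms in \<open>auto simp: BS_carrier BS_inv BS_mult intro: Zinv_uminus Zinv_add\<close>)
  then have "A_sub m \<subseteq> Zinv m \<times> {0}"
    unfolding A_sub_def by (rule generate_subgroup_incl[OF C_sub])
  moreover have "Zinv m \<times> {0} \<subseteq> A_sub m"
  proof
    fix p assume "p \<in> Zinv m \<times> {0::int}"
    then obtain z k where p: "p = (of_int z / of_nat m ^ k, 0)" unfolding Zinv_def by auto
    let ?c = "(of_nat m powi (- int k) :: rat, 0::int)"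
    have "?c = (0, - int k) \<otimes>\<^bsub>BS m\<^esub> gen_a \<otimes>\<^bsub>BS m\<^esub> inv\<^bsub>BS m\<^esub> (0, - int k)"
      using BS_conj_gen_a[OF assms Zinv_zero] by simp
    then have "?c \<in> A_sub m"
      unfolding A_sub_def by (intro generate.incl) (auto simp: BS_carrier)
    moreover have "subgroup (A_sub m) (BS m)"
      unfolding A_sub_def using C_sub by (intro generate_is_subgroup) (auto simp: BS_carrier)
    ultimately have "?c [^]\<^bsub>BS m\<^esub> z \<in> A_sub m"
      by (rule subgroup_int_pow_closed[rotated])
    also have "?c [^]\<^bsub>BS m\<^esub> z = p"
      unfolding BS_int_pow[OF assms Zinv_power_int[OF assms]]
      by (simp add: p power_int_minus divide_inverse)
    finally show "p \<in> A_sub m" .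
  qed
  ultimately show ?thesis by blast
qed

lemma generate_conjugates_subset_kernel:
  fixes f :: "'g \<Rightarrow> 'a::field"
  assumes "group G" and a: "a \<in> carrier G" "f a = 1"
    and nonzero: "\<And>g. g \<in> carrier G \<Longrightarrow> f g \<noteq> 0"
    and mult: "\<And>g h. g \<in> carrier G \<Longrightarrow> h \<in> carrier G \<Longrightarrow> f (g \<otimes>\<^bsub>G\<^esub> h) = f g * f h"
  shows "generate G {g \<otimes>\<^bsub>G\<^esub> a \<otimes>\<^bsub>G\<^esub> inv\<^bsub>G\<^esub> g | g. g \<in> carrier G}
           \<subseteq> {g \<in> carrier G. f g = 1}"
proof -
  interpret group G by fact
  have f_one: "f \<one>\<^bsub>G\<^esub> = 1"
    using mult[of "\<one>\<^bsub>G\<^esub>" "\<one>\<^bsub>G\<^esub>"] nonzero[of "\<one>\<^bsub>G\<^esub>"] by simp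
  have f_inv: "f (inv\<^bsub>G\<^esub> g) = inverse (f g)" if "g \<in> carrier G" for g
    using mult[of "inv\<^bsub>G\<^esub> g" g] that f_one nonzero[OF that] by (simp add: field_simps)
  have "subgroup {g \<in> carrier G. f g = 1} G"
    by (intro subgroupI) (use f_one f_inv mult in auto)
  moreover have "f (g \<otimes>\<^bsub>G\<^esub> a \<otimes>\<^bsub>G\<^esub> inv\<^bsub>G\<^esub> g) = 1" if "g \<in> carrier G" for g
    using that a mult f_inv[of g] nonzero[OF that] by simp
  ultimately show ?thesis
    using a by (intro generate_subgroup_incl) auto
qed

definition one_below_superdiag :: "nat \<Rightarrow> nat \<Rightarrow> 'a::{zero,one} mat \<Rightarrow> bool" where
  "one_below_superdiag n s X \<longleftrightarrow>
     (\<forall>i<n. \<forall>j<n. j < i + s \<longrightarrow> X $$ (i,j) = (if i = j then 1 else 0))"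

lemma one_below_superdiagD:
  "one_below_superdiag n s X \<Longrightarrow> i < n \<Longrightarrow> j < n \<Longrightarrow> j < i + s \<Longrightarrow>
     X $$ (i,j) = (if i = j then 1 else 0)"
  unfolding one_below_superdiag_def by blast

lemma one_below_superdiag_mono:
  "one_below_superdiag n s X \<Longrightarrow> t \<le> s \<Longrightarrow> one_below_superdiag n t X"
  unfolding one_below_superdiag_def by auto

lemma one_below_superdiag_one_mat: "one_below_superdiag n s (1\<^sub>m n)"
  unfolding one_below_superdiag_def by simp

lemma one_below_superdiag_eq_one_mat:
  assumes "X \<in> carrier_mat n n" "one_below_superdiag n n X"
  shows "X = 1\<^sub>m n"
  using assms by (intro eq_matI) (auto simp: one_below_superdiag_def)

lemma index_mult_mat_square:
  fixes X Y :: "'a::semiring_0 mat"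
  assumes "X \<in> carrier_mat n n" "Y \<in> carrier_mat n n" "i < n" "j < n"
  shows "(X * Y) $$ (i,j) = (\<Sum>l<n. X $$ (i,l) * Y $$ (l,j))"
  using assms by (simp add: scalar_prod_def lessThan_atLeast0)

lemma one_below_superdiag_mult:
  fixes X Y :: "'a::semiring_1 mat"
  assumes X: "X \<in> carrier_mat n n" "one_below_superdiag n s X"
    and Y: "Y \<in> carrier_mat n n" "one_below_superdiag n s Y" and "s \<ge> 1"
  shows "one_below_superdiag n s (X * Y)"
  unfolding one_below_superdiag_def
proof (intro allI impI)
  fix i j assume ij: "i < n" "j < n" "j < i + s"
  have "(X * Y) $$ (i,j) = (\<Sum>l\<in>{i}. X $$ (i,l) * Y $$ (l,j))"
    unfolding index_mult_mat_square[OF X(1) Y(1) ij(1,2)]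
  proof (rule sum.mono_neutral_right)
    show "\<forall>l\<in>{..<n} - {i}. X $$ (i,l) * Y $$ (l,j) = 0"
    proof
      fix l assume l: "l \<in> {..<n} - {i}"
      show "X $$ (i,l) * Y $$ (l,j) = 0"
      proof (cases "l < i + s")
        case True then show ?thesis using one_below_superdiagD[OF X(2) ij(1)] l by auto
      next
        case False then show ?thesis using one_below_superdiagD[OF Y(2)] l ij by auto
      qed
    qed
  qed (use ij in auto)
  also have "\<dots> = (if i = j then 1 else 0)"
    using one_below_superdiagD[OF X(2) ij(1,1)] one_below_superdiagD[OF Y(2) ij] \<open>s \<ge> 1\<close> by simp
  finally show "(X * Y) $$ (i,j) = (if i = j then 1 else 0)" .
qed

lemma one_below_superdiag_mult_entry_left:
  fixes X Y :: "'a::semiring_1 mat"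
  assumes X: "X \<in> carrier_mat n n" "one_below_superdiag n 1 X"
    and Y: "Y \<in> carrier_mat n n" "one_below_superdiag n s Y"
    and s: "s \<ge> 1" "i + s < n"
  shows "(X * Y) $$ (i,i+s) = X $$ (i,i+s) + Y $$ (i,i+s)"
proof -
  have i: "i < n" "i \<noteq> i + s" using s by auto
  have diag: "X $$ (i,i) = 1" "X $$ (i+s,i+s) = 1" "Y $$ (i,i) = 1" "Y $$ (i+s,i+s) = 1"
    using one_below_superdiagD[OF X(2)] one_below_superdiagD[OF Y(2)] s by auto
  have "(X * Y) $$ (i,i+s) = (\<Sum>l\<in>{i, i+s}. X $$ (i,l) * Y $$ (l,i+s))"
    unfolding index_mult_mat_square[OF X(1) Y(1) i(1) s(2)]
  proof (rule sum.mono_neutral_right)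
    show "\<forall>l\<in>{..<n} - {i, i+s}. X $$ (i,l) * Y $$ (l,i+s) = 0"
    proof
      fix l assume l: "l \<in> {..<n} - {i, i+s}"
      show "X $$ (i,l) * Y $$ (l,i+s) = 0"
      proof (cases "l < i")
        case True then show ?thesis using one_below_superdiagD[OF X(2) i(1)] l by auto
      next
        case False then show ?thesis using one_below_superdiagD[OF Y(2) _ s(2)] l by auto
      qed
    qed
  qed (use s in auto)
  then show ?thesis
    using i diag by (simp add: add.commute)
qed

lemma one_below_superdiag_mult_entry_right:
  fixes X Y :: "'a::semiring_1 mat"
  assumes X: "X \<in> carrier_mat n n" "one_below_superdiag n 1 X"
    and Y: "Y \<in> carrier_mat n n" "one_below_superdiag n s Y"
    and s: "s \<ge> 1" "i + s < n"
  shows "(Y * X) $$ (i,i+s) = X $$ (i,i+s) + Y $$ (i,i+s)"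
proof -
  have i: "i < n" "i \<noteq> i + s" using s by auto
  have diag: "X $$ (i,i) = 1" "X $$ (i+s,i+s) = 1" "Y $$ (i,i) = 1" "Y $$ (i+s,i+s) = 1"
    using one_below_superdiagD[OF X(2)] one_below_superdiagD[OF Y(2)] s by auto
  have "(Y * X) $$ (i,i+s) = (\<Sum>l\<in>{i, i+s}. Y $$ (i,l) * X $$ (l,i+s))"
    unfolding index_mult_mat_square[OF Y(1) X(1) i(1) s(2)]
  proof (rule sum.mono_neutral_right)
    show "\<forall>l\<in>{..<n} - {i, i+s}. Y $$ (i,l) * X $$ (l,i+s) = 0"
    proof
      fix l assume l: "l \<in> {..<n} - {i, i+s}"
      show "Y $$ (i,l) * X $$ (l,i+s) = 0"
      proof (cases "l < i + s")
        case True then show ?thesis using one_below_superdiagD[OF Y(2) i(1)] l by auto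
      next
        case False then show ?thesis using one_below_superdiagD[OF X(2) _ s(2)] l by auto
      qed
    qed
  qed (use s in auto)
  then show ?thesis
    using i diag by simp
qed

lemma one_below_superdiag_pow:
  fixes X :: "'a::semiring_1 mat"
  assumes "X \<in> carrier_mat n n" "one_below_superdiag n s X" "s \<ge> 1"
  shows "one_below_superdiag n s (X ^\<^sub>m k)"
  using assms by (induction k) (auto simp: one_below_superdiag_one_mat one_below_superdiag_mult)

lemma one_below_superdiag_pow_entry:
  fixes X :: "'a::semiring_1 mat"
  assumes X: "X \<in> carrier_mat n n" "one_below_superdiag n s X" and s: "s \<ge> 1" "i + s < n"
  shows "(X ^\<^sub>m k) $$ (i,i+s) = of_nat k * X $$ (i,i+s)"
proof (induction k)
  case 0 then show ?case using X(1) s by simp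
next
  case (Suc k)
  have "one_below_superdiag n 1 (X ^\<^sub>m k)"
    using one_below_superdiag_mono[OF one_below_superdiag_pow[OF X s(1)] s(1)] .
  then show ?case
    using one_below_superdiag_mult_entry_left[OF pow_carrier_mat[OF X(1)] _ X s] Suc
    by (simp add: distrib_right add.commute)
qed

lemma unitriangular_conj_entry:
  fixes V X Y :: "'a::ring_1 mat"
  assumes V: "V \<in> carrier_mat n n" "one_below_superdiag n 1 V"
    and X: "X \<in> carrier_mat n n" "one_below_superdiag n s X"
    and Y: "Y \<in> carrier_mat n n" "one_below_superdiag n s Y"
    and s: "s \<ge> 1" "i + s < n" and conj: "V * X = Y * V"
  shows "X $$ (i,i+s) = Y $$ (i,i+s)"
  using arg_cong[OF conj, of "\<lambda>A. A $$ (i,i+s)"]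
    one_below_superdiag_mult_entry_left[OF V X s] one_below_superdiag_mult_entry_right[OF V Y s]
  by simp

lemma unitriangular_conj_pow_eq_one_mat:
  fixes u V :: "'a::{idom,ring_char_0} mat"
  assumes u: "u \<in> carrier_mat n n" "one_below_superdiag n 1 u"
    and V: "V \<in> carrier_mat n n" "one_below_superdiag n 1 V"
    and "M \<noteq> 1" and conj: "V * u = u ^\<^sub>m M * V \<or> V * u ^\<^sub>m M = u * V"
  shows "u = 1\<^sub>m n"
proof -
  have "one_below_superdiag n s u" if "s \<ge> 1" for s
    using that
  proof (induction s rule: nat_induct_at_least)
    case base show ?case by (fact u(2))
  next
    case (Suc s)
    have upper: "u $$ (i,i+s) = 0" if "i + s < n" for i
    proof -
      have uM: "u ^\<^sub>m M \<in> carrier_mat n n" "one_below_superdiag n s (u ^\<^sub>m M)"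
        using one_below_superdiag_pow[OF u(1) Suc.IH Suc.hyps] u(1) by auto
      have "u $$ (i,i+s) = (u ^\<^sub>m M) $$ (i,i+s)"
        using conj unitriangular_conj_entry[OF V u(1) Suc.IH uM Suc.hyps that]
          unitriangular_conj_entry[OF V uM u(1) Suc.IH Suc.hyps that] by auto
      also have "\<dots> = of_nat M * u $$ (i,i+s)"
        by (rule one_below_superdiag_pow_entry[OF u(1) Suc.IH Suc.hyps that])
      finally have "(of_nat M - 1) * u $$ (i,i+s) = 0" by (simp add: algebra_simps)
      then show ?thesis using \<open>M \<noteq> 1\<close> by simp
    qed
    show ?case
      unfolding one_below_superdiag_def
    proof (intro allI impI)
      fix i j assume ij: "i < n" "j < n" "j < i + Suc s"
      show "u $$ (i,j) = (if i = j then 1 else 0)"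
      proof (cases "j = i + s")
        case True then show ?thesis using upper ij Suc.hyps by auto
      next
        case False then show ?thesis using one_below_superdiagD[OF Suc.IH ij(1,2)] ij by auto
      qed
    qed
  qed
  then have "one_below_superdiag n (Suc n) u" by simp
  then show ?thesis
    using one_below_superdiag_eq_one_mat[OF u(1)] one_below_superdiag_mono[of n "Suc n" u n]
    by simp
qed

lemma upper_triangular_mult_diag:
  fixes X Y :: "'a::semiring_0 mat"
  assumes X: "X \<in> carrier_mat n n" "upper_triangular X"
    and Y: "Y \<in> carrier_mat n n" "upper_triangular Y" and i: "i < n"
  shows "(X * Y) $$ (i,i) = X $$ (i,i) * Y $$ (i,i)"
proof -
  have "(X * Y) $$ (i,i) = (\<Sum>l\<in>{i}. X $$ (i,l) * Y $$ (l,i))"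
    unfolding index_mult_mat_square[OF X(1) Y(1) i i]
  proof (rule sum.mono_neutral_right)
    show "\<forall>l\<in>{..<n} - {i}. X $$ (i,l) * Y $$ (l,i) = 0"
    proof
      fix l assume l: "l \<in> {..<n} - {i}"
      show "X $$ (i,l) * Y $$ (l,i) = 0"
      proof (cases "l < i")
        case True then show ?thesis using upper_triangularD[OF X(2)] X(1) i by simp
      next
        case False then show ?thesis using upper_triangularD[OF Y(2)] Y(1) l by simp
      qed
    qed
  qed (use i in auto)
  then show ?thesis by simp
qed

lemma power_odd_eq_one:
  fixes x :: "'a::linordered_idom"
  assumes "x ^ k = 1" "odd k"
  shows "x = 1"
proof -
  have "\<bar>x\<bar> ^ k = 1 ^ k" by (metis assms(1) power_abs abs_one power_one)
  then have "\<bar>x\<bar> = 1"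
    by (rule power_eq_imp_eq_base[OF _ abs_ge_zero zero_le_one odd_pos[OF assms(2)]])
  then show ?thesis using assms by (auto simp: abs_if split: if_splits)
qed

lemma T_mat_upper_triangular: "X \<in> T_mat n m \<Longrightarrow> upper_triangular X"
  unfolding T_mat_def by (auto intro!: upper_triangularI)

lemma U_mat_one_below_superdiag: "X \<in> U_mat n m \<Longrightarrow> one_below_superdiag n 1 X"
  unfolding one_below_superdiag_def U_mat_def T_mat_def by (auto simp: less_Suc_eq)

locale BS_rep =
  fixes m n :: nat and \<rho> :: "rat \<times> int \<Rightarrow> rat mat"
  assumes m_ge_2: "m \<ge> 2" and inj_rep: "inj_rep m n \<rho>"
begin

lemma m_pos: "m > 0"
  using m_ge_2 by simp

lemma rep_T_mat: "g \<in> carrier (BS m) \<Longrightarrow> \<rho> g \<in> T_mat n m"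
  and rep_mult: "g \<in> carrier (BS m) \<Longrightarrow> h \<in> carrier (BS m) \<Longrightarrow>
                   \<rho> (g \<otimes>\<^bsub>BS m\<^esub> h) = \<rho> g * \<rho> h"
  and rep_inj: "inj_on \<rho> (carrier (BS m))"
  using inj_rep unfolding inj_rep_def by auto

lemma rep_carrier_mat: "g \<in> carrier (BS m) \<Longrightarrow> \<rho> g \<in> carrier_mat n n"
  using rep_T_mat unfolding T_mat_def by blast

lemma rep_diag_mult:
  assumes "g \<in> carrier (BS m)" "h \<in> carrier (BS m)" "i < n"
  shows "\<rho> (g \<otimes>\<^bsub>BS m\<^esub> h) $$ (i,i) = \<rho> g $$ (i,i) * \<rho> h $$ (i,i)"
  unfolding rep_mult[OF assms(1,2)]
  using assms by (intro upper_triangular_mult_diag)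
    (auto simp: rep_carrier_mat T_mat_upper_triangular[OF rep_T_mat])

lemma rep_of_nat: "k > 0 \<Longrightarrow> \<rho> (of_nat k, 0) = \<rho> gen_a ^\<^sub>m k"
proof (induction k)
  case (Suc k)
  have "\<rho> (of_nat (Suc k), 0) = \<rho> ((of_nat k, 0) \<otimes>\<^bsub>BS m\<^esub> gen_a)"
    by (simp add: BS_mult gen_a_def add.commute)
  also have "\<dots> = \<rho> (of_nat k, 0) * \<rho> gen_a"
    by (simp add: rep_mult BS_carrier gen_a_def)
  finally show ?case
    using Suc rep_carrier_mat[of gen_a] by (cases k) (auto simp: BS_carrier gen_a_def)
qed simp

lemma rep_gen_a_neq_one_mat: "\<rho> gen_a \<noteq> 1\<^sub>m n"
proof
  assume a1: "\<rho> gen_a = 1\<^sub>m n"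
  have "\<rho> (of_nat 2, 0) = \<rho> gen_a"
    using rep_of_nat[of 2] by (simp add: a1 numeral_2_eq_2)
  then have "((of_nat 2)::rat, 0::int) = gen_a"
    by (rule inj_onD[OF rep_inj]) (use Zinv_of_nat[of 2 m] in \<open>auto simp: BS_carrier gen_a_def\<close>)
  then show False by (simp add: gen_a_def)
qed

text \<open>The relation t^k a t^-k = a^(m^k), written without inverses for either sign of k.\<close>
lemma rep_conj_gen_a:
  fixes k :: int
  defines "u \<equiv> \<rho> gen_a" and "M \<equiv> m ^ nat \<bar>k\<bar>"
  shows "\<rho> (0, k) * u = u ^\<^sub>m M * \<rho> (0, k) \<or> \<rho> (0, k) * u ^\<^sub>m M = u * \<rho> (0, k)"
proof -
  have uM: "u ^\<^sub>m M = \<rho> (of_nat M, 0)"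
    using rep_of_nat[of M] m_pos by (simp add: u_def M_def)
  have carrier: "(0, k) \<in> carrier (BS m)" "gen_a \<in> carrier (BS m)"
    "(of_nat M, 0) \<in> carrier (BS m)"
    by (auto simp: BS_carrier gen_a_def)
  show ?thesis
  proof (cases "k \<ge> 0")
    case True
    have "\<rho> (0, k) * u = \<rho> ((0, k) \<otimes>\<^bsub>BS m\<^esub> gen_a)"
      using carrier by (simp add: u_def rep_mult)
    also have "(0, k) \<otimes>\<^bsub>BS m\<^esub> gen_a = (of_nat M, 0) \<otimes>\<^bsub>BS m\<^esub> (0, k)"
      using True by (simp add: BS_mult gen_a_def M_def power_int_def)
    also have "\<rho> \<dots> = u ^\<^sub>m M * \<rho> (0, k)"
      using carrier by (simp add: uM rep_mult)
    finally show ?thesis ..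
  next
    case False
    have "\<rho> (0, k) * u ^\<^sub>m M = \<rho> ((0, k) \<otimes>\<^bsub>BS m\<^esub> (of_nat M, 0))"
      using carrier by (simp add: uM rep_mult)
    also have "(0, k) \<otimes>\<^bsub>BS m\<^esub> (of_nat M, 0) = gen_a \<otimes>\<^bsub>BS m\<^esub> (0, k)"
      using False m_pos by (simp add: BS_mult gen_a_def M_def power_int_def flip: power_mult_distrib)
    also have "\<rho> \<dots> = u * \<rho> (0, k)"
      using carrier by (simp add: u_def rep_mult)
    finally show ?thesis ..
  qed
qed

lemma preimage_U_mat_subset_A_sub:
  assumes "\<rho> ` A_sub m \<subseteq> U_mat n m"
  shows "{g \<in> carrier (BS m). \<rho> g \<in> U_mat n m} \<subseteq> A_sub m"
proof
  fix g assume g: "g \<in> {g \<in> carrier (BS m). \<rho> g \<in> U_mat n m}"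
  then obtain b k where gbk: "g = (b, k)" and b: "b \<in> Zinv m"
    by (cases g) (auto simp: BS_carrier)
  have A_unitri: "one_below_superdiag n 1 (\<rho> (q, 0))" if "q \<in> Zinv m" for q
    using assms that A_sub_eq[OF m_pos] U_mat_one_below_superdiag by blast
  show "g \<in> A_sub m"
  proof (cases "k = 0")
    case True then show ?thesis using gbk b A_sub_eq[OF m_pos] by simp
  next
    case False
    have carrier: "(- b, 0) \<in> carrier (BS m)" "g \<in> carrier (BS m)" "gen_a \<in> carrier (BS m)"
      using b g by (auto simp: BS_carrier gen_a_def Zinv_uminus)
    have "\<rho> (0, k) = \<rho> ((- b, 0) \<otimes>\<^bsub>BS m\<^esub> g)"
      by (simp add: gbk BS_mult)
    then have V: "\<rho> (0, k) = \<rho> (- b, 0) * \<rho> g"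
      using carrier by (simp add: rep_mult)
    have "one_below_superdiag n 1 (\<rho> g)"
      using g U_mat_one_below_superdiag by blast
    then have "one_below_superdiag n 1 (\<rho> (0, k))"
      unfolding V using carrier A_unitri[OF Zinv_uminus[OF b]]
      by (intro one_below_superdiag_mult) (auto simp: rep_carrier_mat)
    moreover have "m ^ nat \<bar>k\<bar> \<noteq> 1"
      using m_ge_2 False by simp
    ultimately have "\<rho> gen_a = 1\<^sub>m n"
      using rep_conj_gen_a[of k] carrier A_unitri[OF Zinv_one]
      by (intro unitriangular_conj_pow_eq_one_mat)
        (auto simp: rep_carrier_mat BS_carrier gen_a_def)
    then show ?thesis using rep_gen_a_neq_one_mat by blast
  qed
qed

lemma special_rep_if_even:
  assumes "even m"
  shows "special_rep m n \<rho>"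
proof -
  interpret BS: group "BS m" by (rule BS_group[OF m_pos])
  have A_carrier: "A_sub m \<subseteq> carrier (BS m)"
    using A_sub_eq[OF m_pos] by (auto simp: BS_carrier)
  have diag_one: "\<rho> g $$ (i,i) = 1" if g: "g \<in> A_sub m" and i: "i < n" for g i
  proof -
    define d where "d g = \<rho> g $$ (i,i)" for g
    have d_mult: "d (g \<otimes>\<^bsub>BS m\<^esub> h) = d g * d h"
      if "g \<in> carrier (BS m)" "h \<in> carrier (BS m)" for g h
      unfolding d_def using rep_diag_mult[OF that i] .
    have d_nonzero: "d g \<noteq> 0" if "g \<in> carrier (BS m)" for g
      using rep_T_mat[OF that] i unfolding d_def T_mat_def by auto
    have "d \<one>\<^bsub>BS m\<^esub> * d \<one>\<^bsub>BS m\<^esub> = d \<one>\<^bsub>BS m\<^esub> * 1"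
      using d_mult[of "\<one>\<^bsub>BS m\<^esub>" "\<one>\<^bsub>BS m\<^esub>"] by simp
    then have d_one: "d \<one>\<^bsub>BS m\<^esub> = 1"
      using d_nonzero[OF BS.one_closed] by (metis mult_left_cancel)
    have a: "gen_a \<in> carrier (BS m)" "(0, 1) \<in> carrier (BS m)"
      by (auto simp: BS_carrier gen_a_def)
    have d_pow: "d (gen_a [^]\<^bsub>BS m\<^esub> k) = d gen_a ^ k" for k :: nat
      by (induction k) (simp_all add: d_one d_mult a)
    have "d (0, 1) * d gen_a = d ((0, 1) \<otimes>\<^bsub>BS m\<^esub> gen_a)"
      by (simp add: d_mult a)
    also have "(0, 1) \<otimes>\<^bsub>BS m\<^esub> gen_a = gen_a [^]\<^bsub>BS m\<^esub> m \<otimes>\<^bsub>BS m\<^esub> (0, 1)"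
      by (simp add: gen_a_def BS_nat_pow BS_mult)
    also have "d \<dots> = d (0, 1) * (d gen_a * d gen_a ^ (m - 1))"
      using m_pos by (simp add: d_mult a d_pow mult.commute flip: power_Suc)
    finally have "d gen_a ^ (m - 1) = 1"
      using d_nonzero a by simp
    then have "d gen_a = 1"
      by (rule power_odd_eq_one) (use assms m_pos in simp)
    then have "A_sub m \<subseteq> {g \<in> carrier (BS m). d g = 1}"
      unfolding A_sub_def
      by (intro generate_conjugates_subset_kernel[OF BS.is_group a(1)] d_nonzero d_mult)
    then show ?thesis using g unfolding d_def by blast
  qed
  have "\<rho> ` A_sub m \<subseteq> U_mat n m"
    using diag_one rep_T_mat A_carrier by (auto simp: U_mat_def)
  then show ?thesis
    using inj_rep by (simp add: special_rep_def)
qed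

end

theorem lemma4p5:
  fixes m n :: nat
  assumes "m \<ge> 2" and "n \<ge> 1"
  shows "(\<forall>\<rho>. special_rep m n \<rho> \<longrightarrow>
            {g \<in> carrier (BS m). \<rho> g \<in> U_mat n m} = A_sub m)
       \<and> (even m \<longrightarrow> (\<forall>\<rho>. inj_rep m n \<rho> \<longrightarrow> special_rep m n \<rho>))"
proof (intro conjI allI impI)
  fix \<rho> assume special: "special_rep m n \<rho>"
  then interpret BS_rep m n \<rho>
    using assms(1) by unfold_locales (simp_all add: special_rep_def)
  have "A_sub m \<subseteq> carrier (BS m)"
    using A_sub_eq[OF m_pos] by (auto simp: BS_carrier)
  then show "{g \<in> carrier (BS m). \<rho> g \<in> U_mat n m} = A_sub m"
    using preimage_U_mat_subset_A_sub special by (auto simp: special_rep_def)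
next
  fix \<rho> assume "even m" and "inj_rep m n \<rho>"
  then interpret BS_rep m n \<rho>
    using assms(1) by unfold_locales
  show "special_rep m n \<rho>"
    by (rule special_rep_if_even) fact
qed

end
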